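(* Let $n\ge7$ and let $p$ be an odd prime with $p+3\le n$. In the symmetric group $\mathfrak S_n$ put $a=(1,p+2,p+1)(2,p+3)$ and $c=(1,2,\dots,p)(p+1,p+2,\dots,n)$. Then: (1) there is no automorphism $\varphi$ of $\mathfrak S_n$ with $\varphi(a)=a^{-1}$ and $\varphi(c)=c^{-1}$; (2) $\mathfrak S_n=\langle a,c\rangle$. *)

theory Defs
  imports "HOL-Algebra.Sym_Groups" "HOL-Algebra.Generated_Groups" "HOL-Computational_Algebra.Primes"
begin

definition perm_a :: "nat \<Rightarrow> (nat \<Rightarrow> nat)" where
  "perm_a p = cycle_of_list [1, p+2, p+1] \<circ> cycle_of_list [2, p+3]"

definition perm_c :: "nat \<Rightarrow> nat \<Rightarrow> (nat \<Rightarrow> nat)" where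
  "perm_c n p = cycle_of_list [1..<p+1] \<circ> cycle_of_list [p+1..<n+1]"

end

theory Submission
  imports Defs
begin

text \<open>
  The cube a^3 = (2, p+3) is a transposition. Conjugating it by a, a^2, c, c^-1 and by
  transpositions already obtained yields (1, 2), (p, p+1) and (p+1, p+2), and conjugation by c
  shifts an adjacent transposition along either cycle of c; so \<langle>a, c\<rangle> contains every adjacent
  transposition (i, i+1) and is the whole symmetric group.

  The permutations u = c a^2 c^-1 = (2, p+2, p+3) and v = a^-2 c^-1 a^3 c = (1, p+1) have
  disjoint supports and commute. A homomorphism inverting a and c maps them to (p, p+1, n) and
  (1, p+1, p+2)(3, c(p+3)), which do not commute: their two products send 1 to n and to p+1.
\<close>

lemma cycle_of_list_upt_apply:
  assumes "a < b"
  shows "cycle_of_list [a..<b] x =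
    (if a \<le> x \<and> Suc x < b then Suc x else if Suc x = b then a else x)"
  using assms
proof (induction "b - a - 1" arbitrary: a x)
  case 0
  then have "b = Suc a" by simp
  then show ?case by auto
next
  case (Suc k)
  then have "[a..<b] = a # Suc a # [Suc (Suc a)..<b]" and "[Suc a..<b] = Suc a # [Suc (Suc a)..<b]"
    by (simp_all add: upt_rec)
  then have "cycle_of_list [a..<b] = transpose a (Suc a) \<circ> cycle_of_list [Suc a..<b]"
    by simp
  moreover have "cycle_of_list [Suc a..<b] y =
      (if Suc a \<le> y \<and> Suc y < b then Suc y else if Suc y = b then Suc a else y)" for y
    using Suc(1)[of "Suc a"] Suc(2,3) by (auto simp del: upt_Suc)
  ultimately show ?case using Suc(2,3) by (auto simp: transpose_def simp del: upt_Suc)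
qed

lemma inv_cycle_of_list_three:
  assumes "distinct [x, y, z]"
  shows "inv' (cycle_of_list [x, y, z]) = cycle_of_list [x, z, y]"
  by (rule inv_unique_comp) (use assms in \<open>auto simp: fun_eq_iff transpose_def\<close>)

lemma conjugation_of_cycle_by_inv:
  assumes "distinct cs" and "bij g"
  shows "inv' g \<circ> cycle_of_list cs \<circ> g = cycle_of_list (map (inv' g) cs)"
  using conjugation_of_cycle[OF assms(1) bij_imp_bij_inv[OF assms(2)]] inv_inv_eq[OF assms(2)]
  by simp

lemma perm_a_apply:
  assumes "3 \<le> p"
  shows "perm_a p x = (if x = 1 then p + 2 else if x = p + 2 then p + 1 else if x = p + 1 then 1
    else if x = 2 then p + 3 else if x = p + 3 then 2 else x)"
  using assms unfolding perm_a_def by (auto simp: transpose_def)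

lemma perm_c_apply:
  assumes "1 \<le> p" and "p < n"
  shows "perm_c n p x = (if 1 \<le> x \<and> x < p then x + 1 else if x = p then 1
    else if p < x \<and> x < n then x + 1 else if x = n then p + 1 else x)"
  using assms unfolding perm_c_def by (simp add: cycle_of_list_upt_apply del: upt_Suc)

lemma perm_a_permutes:
  assumes "p + 3 \<le> n"
  shows "perm_a p permutes {1..n}"
proof -
  have "cycle_of_list [1, p + 2, p + 1] permutes {1..n}" "cycle_of_list [2, p + 3] permutes {1..n}"
    using assms by (intro permutes_subset[OF cycle_permutes]; auto)+
  then show ?thesis unfolding perm_a_def by (rule permutes_compose[rotated])
qed

lemma perm_c_permutes:
  assumes "p \<le> n"
  shows "perm_c n p permutes {1..n}"
proof -
  have "cycle_of_list [1..<p + 1] permutes {1..n}" "cycle_of_list [p + 1..<n + 1] permutes {1..n}"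
    using assms by (auto intro!: permutes_subset[OF cycle_permutes])
  then show ?thesis unfolding perm_c_def by (rule permutes_compose[rotated])
qed

lemma perm_c_inv_apply:
  assumes "1 \<le> p" and "p < n"
  shows "inv' (perm_c n p) x = (if 1 < x \<and> x \<le> p then x - 1 else if x = 1 then p
    else if p + 1 < x \<and> x \<le> n then x - 1 else if x = p + 1 then n else x)"
  by (subst permutes_inv_eq[OF perm_c_permutes]) (use assms in \<open>auto simp: perm_c_apply\<close>)

lemma perm_a_square:
  assumes "3 \<le> p"
  shows "perm_a p \<circ> perm_a p = cycle_of_list [1, p + 1, p + 2]"
  using assms by (auto simp: fun_eq_iff perm_a_apply transpose_def)

lemma perm_a_cube:
  assumes "3 \<le> p"
  shows "perm_a p \<circ> perm_a p \<circ> perm_a p = transpose 2 (p + 3)"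
  using assms by (auto simp: fun_eq_iff perm_a_apply transpose_def)

lemma transpose_conj_mem:
  assumes H: "subgroup H (sym_group n)" and "g \<in> H" and "transpose i j \<in> H"
  shows "transpose (g i) (g j) \<in> H"
proof -
  have g: "g permutes {1..n}"
    using subgroup.subset[OF H] \<open>g \<in> H\<close> by (auto simp: sym_group_carrier)
  have "inv' g \<in> H"
    using subgroup.m_inv_closed[OF H \<open>g \<in> H\<close>] g by (simp add: sym_group_carrier)
  then have "g \<circ> transpose i j \<circ> inv' g \<in> H"
    using subgroup.m_closed[OF H] assms(2,3) by (simp add: sym_group_mult)
  moreover have "g \<circ> transpose i j \<circ> inv' g = transpose (g i) (g j) \<circ> g \<circ> inv' g"
    using transpose_comp_eq[OF permutes_bij[OF g], of "g i" "g j"]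
    by (simp add: permutes_inverses(2)[OF g])
  moreover have "transpose (g i) (g j) \<circ> g \<circ> inv' g = transpose (g i) (g j)"
    by (simp add: comp_assoc permutes_inv_o(1)[OF g])
  ultimately show ?thesis by simp
qed

lemma subgroup_sym_group_eq_carrier_if_transpositions:
  assumes H: "subgroup H (sym_group n)"
    and transp: "\<And>x y. x \<in> {1..n} \<Longrightarrow> y \<in> {1..n} \<Longrightarrow> transpose x y \<in> H"
  shows "H = carrier (sym_group n)"
proof
  show "H \<subseteq> carrier (sym_group n)" using subgroup.subset[OF H] .
  have "q \<in> H" if "swapidseq_ext S k q" "S \<subseteq> {1..n}" for S k q
    using that
  proof (induction rule: swapidseq_ext.induct)
    case empty
    then show ?case using subgroup.one_closed[OF H] by (simp add: sym_group_one id_def)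
  next
    case (comp S k q a b)
    then have "transpose a b \<in> H" and "q \<in> H" by (auto intro: transp)
    then show ?case using subgroup.m_closed[OF H] by (simp add: sym_group_mult comp_def)
  qed simp
  then show "carrier (sym_group n) \<subseteq> H"
    by (metis finite_atLeastAtMost subsetI order_refl swapidseq_ext_of_permutation
        sym_group_carrier)
qed

lemma subgroup_sym_group_eq_carrier_if_adjacent_transpositions:
  assumes H: "subgroup H (sym_group n)"
    and adjacent: "\<And>i. 1 \<le> i \<Longrightarrow> i < n \<Longrightarrow> transpose i (Suc i) \<in> H"
  shows "H = carrier (sym_group n)"
proof -
  have trivial: "transpose x x \<in> H" for x
    using subgroup.one_closed[OF H] by (simp add: sym_group_one)
  have star: "transpose 1 x \<in> H" if "1 \<le> x" "x \<le> n" for x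
    using that
  proof (induction x)
    case (Suc x)
    consider "x = 0" | "x = 1" | "2 \<le> x" by linarith
    then show ?case
    proof cases
      case 3
      have "transpose x (Suc x) \<in> H" "transpose 1 x \<in> H"
        using 3 Suc by (auto intro: adjacent)
      then have "transpose (transpose x (Suc x) 1) (transpose x (Suc x) x) \<in> H"
        by (rule transpose_conj_mem[OF H])
      with 3 show ?thesis by simp
    qed (use trivial adjacent[of 1] Suc.prems in \<open>simp_all add: id_def\<close>)
  qed simp
  have "transpose x y \<in> H" if "x \<in> {1..n}" "y \<in> {1..n}" for x y
  proof (cases "y = 1 \<or> y = x")
    case True
    then show ?thesis using star that trivial by (auto simp: transpose_commute)
  next
    case False
    have "transpose (transpose 1 x 1) (transpose 1 x y) \<in> H"
      using that by (intro transpose_conj_mem[OF H star star]) auto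
    with False show ?thesis by simp
  qed
  then show ?thesis by (rule subgroup_sym_group_eq_carrier_if_transpositions[OF H])
qed

lemma transpose_Suc_mem_shift:
  assumes H: "subgroup H (sym_group n)" and "g \<in> H"
    and shift: "\<And>j. i \<le> j \<Longrightarrow> j < k \<Longrightarrow> g j = Suc j"
    and "transpose i (Suc i) \<in> H"
  shows "i \<le> j \<Longrightarrow> j < k \<Longrightarrow> transpose j (Suc j) \<in> H"
proof (induction j)
  case (Suc j)
  show ?case
  proof (cases "i = Suc j")
    case False
    with Suc have "transpose (g j) (g (Suc j)) \<in> H"
      by (intro transpose_conj_mem[OF H \<open>g \<in> H\<close>] Suc.IH) auto
    with False Suc.prems show ?thesis by (simp add: shift)
  qed (use assms in simp)
qed (use assms in simp)

lemma subgroup_generate_perm_a_perm_c: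
  assumes "p + 3 \<le> n"
  shows "subgroup (generate (sym_group n) {perm_a p, perm_c n p}) (sym_group n)"
  using perm_a_permutes perm_c_permutes assms
  by (intro group.generate_is_subgroup[OF sym_group_is_group]) (auto simp: sym_group_carrier)

lemma transpose_Suc_mem_generate_perm_a_perm_c:
  assumes "3 \<le> p" and "p + 3 \<le> n" and "1 \<le> i" and "i < n"
  shows "transpose i (Suc i) \<in> generate (sym_group n) {perm_a p, perm_c n p}"
proof -
  let ?a = "perm_a p" and ?c = "perm_c n p"
  define H where "H = generate (sym_group n) {?a, ?c}"
  have H: "subgroup H (sym_group n)"
    unfolding H_def using subgroup_generate_perm_a_perm_c assms by simp
  have a: "?a \<in> H" and c: "?c \<in> H" unfolding H_def by (auto intro: generate.incl)
  have c_inv: "inv' ?c \<in> H"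
    using subgroup.m_inv_closed[OF H c] perm_c_permutes assms by (simp add: sym_group_carrier)
  have a_square: "?a \<circ> ?a \<in> H" and a_cube: "?a \<circ> ?a \<circ> ?a \<in> H"
    using subgroup.m_closed[OF H] a by (simp_all add: sym_group_mult)
  have "transpose 2 (p + 3) \<in> H" using a_cube perm_a_cube assms by simp
  from transpose_conj_mem[OF H c_inv this]
  have t1: "transpose 1 (p + 2) \<in> H" using assms by (simp add: perm_c_inv_apply)
  from transpose_conj_mem[OF H c_inv t1]
  have tp: "transpose p (p + 1) \<in> H" using assms by (simp add: perm_c_inv_apply)
  from transpose_conj_mem[OF H a t1]
  have tp1: "transpose (p + 1) (p + 2) \<in> H"
    using assms by (simp add: perm_a_apply transpose_commute)
  from transpose_conj_mem[OF H a_square t1]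
  have "transpose (p + 1) 1 \<in> H" using assms by (simp add: perm_a_square)
  from transpose_conj_mem[OF H c this]
  have "transpose (p + 2) 2 \<in> H" using assms by (simp add: perm_c_apply numeral_2_eq_2)
  from transpose_conj_mem[OF H t1 this]
  have t12: "transpose 1 2 \<in> H" using assms by (simp add: transpose_commute)
  consider "i < p" | "i = p" | "p + 1 \<le> i" by linarith
  then have "transpose i (Suc i) \<in> H"
  proof cases
    case 1
    show ?thesis
      by (rule transpose_Suc_mem_shift[OF H c _ _ assms(3) 1])
        (use assms t12 in \<open>simp_all add: perm_c_apply numeral_2_eq_2\<close>)
  next
    case 3
    show ?thesis
      by (rule transpose_Suc_mem_shift[OF H c _ _ 3 assms(4)])
        (use assms tp1 in \<open>simp_all add: perm_c_apply\<close>)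
  qed (use tp in simp)
  then show ?thesis unfolding H_def .
qed

lemma generate_perm_a_perm_c:
  assumes "3 \<le> p" and "p + 3 \<le> n"
  shows "generate (sym_group n) {perm_a p, perm_c n p} = carrier (sym_group n)"
  using subgroup_generate_perm_a_perm_c transpose_Suc_mem_generate_perm_a_perm_c assms
  by (intro subgroup_sym_group_eq_carrier_if_adjacent_transpositions) auto

lemma hom_sym_group_comp:
  assumes "\<phi> \<in> hom (sym_group n) (sym_group n)" and "f permutes {1..n}" and "g permutes {1..n}"
  shows "\<phi> (f \<circ> g) = \<phi> f \<circ> \<phi> g"
  using hom_mult[OF assms(1), of f g] assms(2,3) by (simp add: sym_group_mult sym_group_carrier)

lemma hom_sym_group_inv:
  assumes "\<phi> \<in> hom (sym_group n) (sym_group n)" and "f permutes {1..n}"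
  shows "\<phi> (inv' f) = inv' (\<phi> f)"
proof -
  interpret group_hom "sym_group n" "sym_group n" \<phi>
    using assms(1) by (simp add: group_hom_def group_hom_axioms_def sym_group_is_group)
  show ?thesis using hom_inv[of f] hom_closed[of f] assms(2) by (simp add: sym_group_carrier)
qed

lemma perm_a_perm_c_commuting_pair:
  assumes "3 \<le> p" and "p + 3 \<le> n"
  defines "r \<equiv> perm_a p \<circ> perm_a p" and "t \<equiv> perm_a p \<circ> perm_a p \<circ> perm_a p"
    and "c \<equiv> perm_c n p"
  defines "u \<equiv> c \<circ> r \<circ> inv' c" and "v \<equiv> inv' r \<circ> (inv' c \<circ> t \<circ> c)"
  shows "u \<circ> v = v \<circ> u"
proof -
  have c: "bij c" unfolding c_def using assms(2) by (intro permutes_bij[OF perm_c_permutes]) simp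
  have "u = cycle_of_list [2, p + 2, p + 3]"
    unfolding u_def r_def perm_a_square[OF assms(1)] using assms
    by (subst conjugation_of_cycle[OF _ c]) (simp_all add: c_def perm_c_apply eval_nat_numeral)
  moreover have "inv' r = cycle_of_list [1, p + 2, p + 1]"
    unfolding r_def perm_a_square[OF assms(1)] by (rule inv_cycle_of_list_three) (use assms in simp)
  moreover have "inv' c \<circ> t \<circ> c = transpose 1 (p + 2)"
    unfolding t_def perm_a_cube[OF assms(1)]
    using conjugation_of_cycle_by_inv[of "[2, p + 3]", OF _ c] assms
    by (simp add: c_def perm_c_inv_apply)
  ultimately show ?thesis
    unfolding v_def using assms by (auto simp: fun_eq_iff transpose_def)
qed

lemma perm_a_perm_c_noncommuting_pair:
  assumes "3 \<le> p" and "p + 3 \<le> n"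
  defines "r \<equiv> perm_a p \<circ> perm_a p" and "t \<equiv> perm_a p \<circ> perm_a p \<circ> perm_a p"
    and "c \<equiv> perm_c n p"
  defines "u \<equiv> inv' c \<circ> inv' r \<circ> c" and "v \<equiv> r \<circ> (c \<circ> t \<circ> inv' c)"
  shows "u \<circ> v \<noteq> v \<circ> u"
proof -
  have c: "bij c" unfolding c_def using assms(2) by (intro permutes_bij[OF perm_c_permutes]) simp
  have r_inv: "inv' r = cycle_of_list [1, p + 2, p + 1]"
    unfolding r_def perm_a_square[OF assms(1)] by (rule inv_cycle_of_list_three) (use assms in simp)
  have "u = cycle_of_list [p, p + 1, n]"
    unfolding u_def r_inv using assms
    by (subst conjugation_of_cycle_by_inv[OF _ c]) (simp_all add: c_def perm_c_inv_apply)
  moreover have "c \<circ> t \<circ> inv' c = transpose 3 (c (p + 3))"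
    unfolding t_def perm_a_cube[OF assms(1)]
    using conjugation_of_cycle[of "[2, p + 3]", OF _ c] assms by (simp add: c_def perm_c_apply)
  ultimately have "(u \<circ> v) 1 = n" and "(v \<circ> u) 1 = p + 1"
    unfolding v_def r_def perm_a_square[OF assms(1)] using assms
    by (auto simp: c_def perm_c_apply transpose_def)
  with assms(2) have "(u \<circ> v) 1 \<noteq> (v \<circ> u) 1" by simp
  then show ?thesis by metis
qed

lemma no_hom_inverting_perm_a_perm_c:
  assumes "3 \<le> p" and "p + 3 \<le> n"
    and hom: "\<phi> \<in> hom (sym_group n) (sym_group n)"
    and \<phi>_a: "\<phi> (perm_a p) = inv' (perm_a p)" and \<phi>_c: "\<phi> (perm_c n p) = inv' (perm_c n p)"
  shows False
proof -
  let ?a = "perm_a p" and ?c = "perm_c n p"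
  let ?r = "?a \<circ> ?a" and ?t = "?a \<circ> ?a \<circ> ?a"
  have a: "?a permutes {1..n}" and c: "?c permutes {1..n}"
    using perm_a_permutes perm_c_permutes assms by auto
  have perms: "?r permutes {1..n}" "?t permutes {1..n}"
    "inv' ?c permutes {1..n}" "inv' ?r permutes {1..n}"
    using a c by (auto intro!: permutes_compose permutes_inv)
  note \<phi>_simps = hom_sym_group_comp[OF hom] hom_sym_group_inv[OF hom] permutes_compose
    permutes_inv permutes_inv_inv
  have \<phi>_r: "\<phi> ?r = inv' ?r"
    using \<phi>_a a by (simp add: \<phi>_simps o_inv_distrib permutes_bij)
  have \<phi>_t: "\<phi> ?t = ?t"
  proof -
    have "\<phi> ?t = inv' ?r \<circ> inv' ?a"
      using \<phi>_r \<phi>_a a perms by (simp add: \<phi>_simps)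
    also have "\<dots> = inv' (?a \<circ> ?r)"
      using o_inv_distrib[OF permutes_bij[OF a] permutes_bij[OF perms(1)]] by simp
    finally show ?thesis using perm_a_cube assms by (simp add: comp_assoc)
  qed
  define u where "u = ?c \<circ> ?r \<circ> inv' ?c"
  define v where "v = inv' ?r \<circ> (inv' ?c \<circ> ?t \<circ> ?c)"
  have "u permutes {1..n}" "v permutes {1..n}"
    unfolding u_def v_def using c perms by (auto intro!: permutes_compose)
  with perm_a_perm_c_commuting_pair[OF assms(1,2)]
  have "\<phi> u \<circ> \<phi> v = \<phi> v \<circ> \<phi> u"
    unfolding u_def v_def by (metis hom_sym_group_comp[OF hom])
  moreover have "\<phi> u = inv' ?c \<circ> inv' ?r \<circ> ?c" and "\<phi> v = ?r \<circ> (?c \<circ> ?t \<circ> inv' ?c)"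
    unfolding u_def v_def using c perms \<phi>_c \<phi>_r \<phi>_t by (simp_all add: \<phi>_simps)
  ultimately show False using perm_a_perm_c_noncommuting_pair[OF assms(1,2)] by simp
qed

theorem mainTheorem12:
  fixes n p :: nat
  assumes "n \<ge> 7" and "prime p" and "odd p" and "p + 3 \<le> n"
  shows "(\<not> (\<exists>\<phi> \<in> iso (sym_group n) (sym_group n).
              \<phi> (perm_a p) = inv\<^bsub>sym_group n\<^esub> (perm_a p) \<and>
              \<phi> (perm_c n p) = inv\<^bsub>sym_group n\<^esub> (perm_c n p))) \<and>
         generate (sym_group n) {perm_a p, perm_c n p} = carrier (sym_group n)"
proof -
  have p: "3 \<le> p"
    using prime_ge_2_nat[OF assms(2)] assms(3) by (cases "p = 2") auto
  have "\<not> (\<exists>\<phi> \<in> iso (sym_group n) (sym_group n).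
              \<phi> (perm_a p) = inv\<^bsub>sym_group n\<^esub> (perm_a p) \<and>
              \<phi> (perm_c n p) = inv\<^bsub>sym_group n\<^esub> (perm_c n p))"
    using no_hom_inverting_perm_a_perm_c[OF p assms(4)] perm_a_permutes perm_c_permutes assms(4)
    by (auto simp: iso_def sym_group_carrier)
  with generate_perm_a_perm_c[OF p assms(4)] show ?thesis by blast
qed

end
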